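(* Let $X=(\mathbb N,\tau_{cof})$ be the natural numbers with the co-finite topology (open sets: $\emptyset$ and complements of finite sets). Then $X$ is a $d$-space and is $s$-well-filtered, the closed Rudin sets of $X$ are exactly $\mathbb N$ and the singletons $\{n\}$, $n\in\mathbb N$, and $X$ is not well-filtered. In particular, an $s$-well-filtered space need not be well-filtered.
   Context: A $T_0$ space $X$ is a $d$-space if $X$ with the specialization order is a dcpo and every open set is Scott open. $Q(X)$ denotes the nonempty compact saturated subsets of $X$; a family of such sets is filtered if nonempty and any two members contain a third member. $X$ is well-filtered if for every open $U$ and filtered $\mathcal K\subseteq Q(X)$, $\bigcap\mathcal K\subseteq U$ implies $K\subseteq U$ for some $K\in\mathcal K$. A set $A$ is strongly compact if for every open $U\supseteq A$ there is a finite $F$ with $A\subseteq\uparrow F\subseteq U$; $Q_s(X)$ is the set of nonempty strongly compact saturated sets, and $X$ is $s$-well-filtered if the well-filtered condition holds for filtered $\mathcal K\subseteq Q_s(X)$. A Rudin set is a nonempty $A$ such that, for some filtered $\mathcal K\subseteq Q(X)$, $\overline A$ is a minimal closed set meeting every member of $\mathcal K$. *)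

theory Defs
  imports "HOL-Analysis.Analysis"
begin

definition cofinite_nat :: "nat topology" where
  "cofinite_nat = topology (\<lambda>U. U = {} \<or> finite (- U))"

lemma istopology_cofinite_nat: "istopology (\<lambda>U::nat set. U = {} \<or> finite (- U))"
  unfolding istopology_def
proof (intro conjI allI impI)
  fix S T :: "nat set"
  assume "S = {} \<or> finite (- S)" "T = {} \<or> finite (- T)"
  then show "S \<inter> T = {} \<or> finite (- (S \<inter> T))" by auto
next
  fix K :: "nat set set"
  assume K: "\<forall>S\<in>K. S = {} \<or> finite (- S)"
  show "\<Union>K = {} \<or> finite (- \<Union>K)"
  proof (cases "\<exists>S\<in>K. S \<noteq> {}")
    case True
    then obtain S where "S \<in> K" "S \<noteq> {}" by blast
    with K have "finite (- S)" by blast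
    moreover have "- \<Union>K \<subseteq> - S" using \<open>S \<in> K\<close> by blast
    ultimately show ?thesis using finite_subset by blast
  qed auto
qed

lemma openin_cofinite_nat: "openin cofinite_nat U \<longleftrightarrow> U = {} \<or> finite (- U)"
  unfolding cofinite_nat_def using istopology_cofinite_nat
  by (simp add: topology_inverse')

definition spec_le :: "'a topology \<Rightarrow> 'a \<Rightarrow> 'a \<Rightarrow> bool" where
  "spec_le X x y \<longleftrightarrow> x \<in> topspace X \<and> y \<in> topspace X \<and> x \<in> X closure_of {y}"

definition upper_set :: "'a topology \<Rightarrow> 'a set \<Rightarrow> bool" where
  "upper_set X A \<longleftrightarrow> A \<subseteq> topspace X \<and> (\<forall>x\<in>A. \<forall>y. spec_le X x y \<longrightarrow> y \<in> A)"

text \<open>Saturated sets = upper sets w.r.t. the specialization order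
  (equivalently, intersections of open sets).\<close>

definition saturated :: "'a topology \<Rightarrow> 'a set \<Rightarrow> bool" where
  "saturated X A \<longleftrightarrow> upper_set X A"

definition up_set :: "'a topology \<Rightarrow> 'a set \<Rightarrow> 'a set" where
  "up_set X F = {y. \<exists>x\<in>F. spec_le X x y}"

definition spec_directed :: "'a topology \<Rightarrow> 'a set \<Rightarrow> bool" where
  "spec_directed X D \<longleftrightarrow> D \<noteq> {} \<and> D \<subseteq> topspace X \<and>
     (\<forall>x\<in>D. \<forall>y\<in>D. \<exists>z\<in>D. spec_le X x z \<and> spec_le X y z)"

definition spec_is_sup :: "'a topology \<Rightarrow> 'a set \<Rightarrow> 'a \<Rightarrow> bool" where
  "spec_is_sup X D s \<longleftrightarrow> s \<in> topspace X \<and> (\<forall>d\<in>D. spec_le X d s) \<and>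
     (\<forall>u\<in>topspace X. (\<forall>d\<in>D. spec_le X d u) \<longrightarrow> spec_le X s u)"

definition spec_dcpo :: "'a topology \<Rightarrow> bool" where
  "spec_dcpo X \<longleftrightarrow> (\<forall>D. spec_directed X D \<longrightarrow> (\<exists>s. spec_is_sup X D s))"

definition scott_open :: "'a topology \<Rightarrow> 'a set \<Rightarrow> bool" where
  "scott_open X U \<longleftrightarrow> upper_set X U \<and>
     (\<forall>D s. spec_directed X D \<longrightarrow> spec_is_sup X D s \<longrightarrow> s \<in> U \<longrightarrow> D \<inter> U \<noteq> {})"

definition d_space :: "'a topology \<Rightarrow> bool" where
  "d_space X \<longleftrightarrow> t0_space X \<and> spec_dcpo X \<and> (\<forall>U. openin X U \<longrightarrow> scott_open X U)"

definition Qsets :: "'a topology \<Rightarrow> 'a set set" where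
  "Qsets X = {K. K \<noteq> {} \<and> compactin X K \<and> saturated X K}"

definition strongly_compact :: "'a topology \<Rightarrow> 'a set \<Rightarrow> bool" where
  "strongly_compact X A \<longleftrightarrow> A \<subseteq> topspace X \<and>
     (\<forall>U. openin X U \<longrightarrow> A \<subseteq> U \<longrightarrow>
        (\<exists>F. finite F \<and> F \<subseteq> topspace X \<and> A \<subseteq> up_set X F \<and> up_set X F \<subseteq> U))"

definition Qs_sets :: "'a topology \<Rightarrow> 'a set set" where
  "Qs_sets X = {K. K \<noteq> {} \<and> strongly_compact X K \<and> saturated X K}"

definition filtered_family :: "'a set set \<Rightarrow> bool" where
  "filtered_family \<K> \<longleftrightarrow> \<K> \<noteq> {} \<and> (\<forall>K1\<in>\<K>. \<forall>K2\<in>\<K>. \<exists>K3\<in>\<K>. K3 \<subseteq> K1 \<inter> K2)"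

definition well_filtered :: "'a topology \<Rightarrow> bool" where
  "well_filtered X \<longleftrightarrow> (\<forall>U \<K>. openin X U \<longrightarrow> \<K> \<subseteq> Qsets X \<longrightarrow> filtered_family \<K> \<longrightarrow>
      \<Inter>\<K> \<subseteq> U \<longrightarrow> (\<exists>K\<in>\<K>. K \<subseteq> U))"

definition s_well_filtered :: "'a topology \<Rightarrow> bool" where
  "s_well_filtered X \<longleftrightarrow> (\<forall>U \<K>. openin X U \<longrightarrow> \<K> \<subseteq> Qs_sets X \<longrightarrow> filtered_family \<K> \<longrightarrow>
      \<Inter>\<K> \<subseteq> U \<longrightarrow> (\<exists>K\<in>\<K>. K \<subseteq> U))"

definition minimal_closed_meeting :: "'a topology \<Rightarrow> 'a set set \<Rightarrow> 'a set \<Rightarrow> bool" where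
  "minimal_closed_meeting X \<K> C \<longleftrightarrow> closedin X C \<and> (\<forall>K\<in>\<K>. C \<inter> K \<noteq> {}) \<and>
     (\<forall>C'. closedin X C' \<longrightarrow> C' \<subseteq> C \<longrightarrow> (\<forall>K\<in>\<K>. C' \<inter> K \<noteq> {}) \<longrightarrow> C' = C)"

definition rudin_set :: "'a topology \<Rightarrow> 'a set \<Rightarrow> bool" where
  "rudin_set X A \<longleftrightarrow> A \<noteq> {} \<and> A \<subseteq> topspace X \<and>
     (\<exists>\<K>. \<K> \<subseteq> Qsets X \<and> filtered_family \<K> \<and> minimal_closed_meeting X \<K> (X closure_of A))"

end

theory Submission
  imports Defs
begin

text \<open>In a T1 space the specialization order is equality, so directed sets are singletons,
  every set is saturated and the strongly compact sets are the finite ones; this already makes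
  every T1 space a d-space and s-well-filtered, and forces finite closed Rudin sets to be
  singletons. In the co-finite topology on \<open>\<nat>\<close>, however, every set is compact, so the tails
  \<open>{n..}\<close> form a filtered family in Q(X) with empty intersection: it witnesses the failure of
  well-filteredness, and \<open>\<nat>\<close> is the minimal closed set meeting all of its members.\<close>

lemma spec_le_t1_space:
  assumes "t1_space X"
  shows "spec_le X x y \<longleftrightarrow> x \<in> topspace X \<and> x = y"
  using assms by (auto simp: spec_le_def t1_space_closedin_singleton closure_of_closedin)

lemma up_set_t1_space: "t1_space X \<Longrightarrow> up_set X F = F \<inter> topspace X"
  by (auto simp: up_set_def spec_le_t1_space)

lemma saturated_t1_space: "t1_space X \<Longrightarrow> A \<subseteq> topspace X \<Longrightarrow> saturated X A"
  by (auto simp: saturated_def upper_set_def spec_le_t1_space)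

lemma spec_directed_t1_space_singleton:
  assumes "t1_space X" "spec_directed X D"
  obtains d where "D = {d}" "d \<in> topspace X"
proof -
  from assms obtain d where "d \<in> D" "D \<subseteq> topspace X"
    unfolding spec_directed_def by blast
  moreover have "\<forall>x\<in>D. \<forall>y\<in>D. x = y"
    using assms(2) unfolding spec_directed_def spec_le_t1_space[OF assms(1)] by fastforce
  ultimately show thesis using that by blast
qed

lemma t1_space_imp_d_space:
  assumes "t1_space X"
  shows "d_space X"
proof -
  have "spec_dcpo X"
    unfolding spec_dcpo_def
  proof (intro allI impI)
    fix D assume "spec_directed X D"
    then obtain d where "D = {d}" "d \<in> topspace X"
      by (rule spec_directed_t1_space_singleton[OF assms])
    then have "spec_is_sup X D d"
      by (simp add: spec_is_sup_def spec_le_t1_space[OF assms])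
    then show "\<exists>s. spec_is_sup X D s" ..
  qed
  moreover have "scott_open X U" if "openin X U" for U
  proof -
    have "D \<inter> U \<noteq> {}" if "spec_directed X D" "spec_is_sup X D s" "s \<in> U" for D s
      using spec_directed_t1_space_singleton[OF assms that(1)] that(2,3)
      by (auto simp: spec_is_sup_def spec_le_t1_space[OF assms])
    then show ?thesis
      using saturated_t1_space[OF assms openin_subset[OF that]]
      by (simp add: scott_open_def saturated_def)
  qed
  ultimately show ?thesis
    using assms t1_imp_t0_space by (auto simp: d_space_def)
qed

lemma strongly_compact_t1_space:
  assumes "t1_space X"
  shows "strongly_compact X A \<longleftrightarrow> finite A \<and> A \<subseteq> topspace X"
proof
  assume "strongly_compact X A"
  then obtain F where "finite F" "A \<subseteq> up_set X F"
    unfolding strongly_compact_def by (meson openin_topspace order_refl)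
  then show "finite A \<and> A \<subseteq> topspace X"
    by (auto simp: up_set_t1_space[OF assms] intro: finite_subset)
qed (auto simp: strongly_compact_def up_set_t1_space[OF assms])

lemma filtered_familyD:
  "filtered_family \<K> \<Longrightarrow> K1 \<in> \<K> \<Longrightarrow> K2 \<in> \<K> \<Longrightarrow> \<exists>K3\<in>\<K>. K3 \<subseteq> K1 \<inter> K2"
  by (simp add: filtered_family_def)

lemma filtered_family_finite_has_least:
  assumes "filtered_family \<K>" and "\<And>K. K \<in> \<K> \<Longrightarrow> finite K"
  shows "\<exists>K0\<in>\<K>. \<forall>K\<in>\<K>. K0 \<subseteq> K"
proof -
  obtain K1 where "K1 \<in> \<K>"
    using assms(1) unfolding filtered_family_def by blast
  from ex_has_least_nat[of "\<lambda>K. K \<in> \<K>" K1 card, OF this]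
  obtain K0 where K0: "K0 \<in> \<K>" and least: "\<forall>K. K \<in> \<K> \<longrightarrow> card K0 \<le> card K"
    by (elim exE conjE)
  have "K0 \<subseteq> K" if K: "K \<in> \<K>" for K
  proof -
    obtain K' where K': "K' \<in> \<K>" "K' \<subseteq> K0 \<inter> K"
      using filtered_familyD[OF assms(1) K0 K] by blast
    have "card K0 \<le> card K'"
      using least K'(1) by blast
    then have "K' = K0"
      using card_seteq[OF assms(2)[OF K0]] K'(2) by blast
    with K' show ?thesis by blast
  qed
  with K0 show ?thesis by blast
qed

lemma t1_space_imp_s_well_filtered:
  assumes "t1_space X"
  shows "s_well_filtered X"
  unfolding s_well_filtered_def
proof (intro allI impI)
  fix U \<K> assume "\<K> \<subseteq> Qs_sets X" "filtered_family \<K>" "\<Inter>\<K> \<subseteq> U"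
  have finite_members: "finite K" if "K \<in> \<K>" for K
  proof -
    have "K \<in> Qs_sets X"
      using that \<open>\<K> \<subseteq> Qs_sets X\<close> by blast
    then show ?thesis
      by (simp add: Qs_sets_def strongly_compact_t1_space[OF assms])
  qed
  obtain K0 where "K0 \<in> \<K>" "\<forall>K\<in>\<K>. K0 \<subseteq> K"
    using filtered_family_finite_has_least[OF \<open>filtered_family \<K>\<close> finite_members] by blast
  then show "\<exists>K\<in>\<K>. K \<subseteq> U" using \<open>\<Inter>\<K> \<subseteq> U\<close> by blast
qed

text \<open>If \<open>A\<close> had two points \<open>a \<noteq> b\<close>, minimality would give members of the family missing
  the closed sets \<open>A - {a}\<close> and \<open>A - {b}\<close>; a common lower bound of them would then miss \<open>A\<close>.\<close>

lemma minimal_closed_meeting_finite_t1_space_singleton: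
  assumes "t1_space X" "filtered_family \<K>" "minimal_closed_meeting X \<K> A" "finite A"
  shows "\<exists>a. A = {a}"
proof (rule ccontr)
  assume not_singleton: "\<nexists>a. A = {a}"
  have meets: "\<forall>K\<in>\<K>. A \<inter> K \<noteq> {}" and "closedin X A"
    using assms(3) by (auto simp: minimal_closed_meeting_def)
  obtain a where "a \<in> A"
    using meets assms(2) unfolding filtered_family_def by blast
  moreover have "A \<noteq> {a}"
    using not_singleton by blast
  ultimately obtain b where ab: "a \<in> A" "b \<in> A" "a \<noteq> b"
    by auto
  have misses: "\<exists>K\<in>\<K>. K \<inter> A \<subseteq> {x}" if "x \<in> A" for x
  proof (rule ccontr)
    assume "\<not> ?thesis"
    then have "\<forall>K\<in>\<K>. (A - {x}) \<inter> K \<noteq> {}" by blast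
    moreover have "A - {x} \<subseteq> topspace X"
      using closedin_subset[OF \<open>closedin X A\<close>] by blast
    then have "closedin X (A - {x})"
      using t1_space_closedin_finite[THEN iffD1, OF assms(1)] assms(4) by simp
    ultimately have "A - {x} = A"
      using assms(3) by (simp add: minimal_closed_meeting_def)
    with that show False by blast
  qed
  obtain Ka where "Ka \<in> \<K>" "Ka \<inter> A \<subseteq> {a}"
    using misses[OF ab(1)] by blast
  obtain Kb where "Kb \<in> \<K>" "Kb \<inter> A \<subseteq> {b}"
    using misses[OF ab(2)] by blast
  obtain K where "K \<in> \<K>" "K \<subseteq> Ka \<inter> Kb"
    using filtered_familyD[OF assms(2) \<open>Ka \<in> \<K>\<close> \<open>Kb \<in> \<K>\<close>] by blast
  with \<open>Ka \<inter> A \<subseteq> {a}\<close> \<open>Kb \<inter> A \<subseteq> {b}\<close> ab(3) have "K \<inter> A = {}"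
    by blast
  with \<open>K \<in> \<K>\<close> meets show False by blast
qed

lemma rudin_set_singleton_t1_space:
  assumes "t1_space X" "x \<in> topspace X" "compactin X {x}"
  shows "rudin_set X {x}"
proof -
  have closed: "closedin X {x}"
    using assms(1,2) by (simp add: t1_space_closedin_singleton)
  have "{{x}} \<subseteq> Qsets X"
    using assms(2,3) saturated_t1_space[OF assms(1)] by (simp add: Qsets_def)
  moreover have "filtered_family {{x}}"
    by (simp add: filtered_family_def)
  moreover have "minimal_closed_meeting X {{x}} (X closure_of {x})"
    using closed by (auto simp: closure_of_closedin minimal_closed_meeting_def)
  ultimately show ?thesis
    using assms(2) unfolding rudin_set_def by (intro conjI exI[of _ "{{x}}"]) auto
qed

lemma topspace_cofinite_nat [simp]: "topspace cofinite_nat = UNIV"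
  by (metis openin_cofinite_nat openin_subset Compl_UNIV_eq finite.emptyI top.extremum_unique)

lemma closedin_cofinite_nat: "closedin cofinite_nat A \<longleftrightarrow> A = UNIV \<or> finite A"
  by (auto simp: closedin_def openin_cofinite_nat Compl_eq_Diff_UNIV[symmetric])

lemma t1_space_cofinite_nat: "t1_space cofinite_nat"
  by (simp add: t1_space_closedin_singleton closedin_cofinite_nat)

lemma compactin_cofinite_nat: "compactin cofinite_nat S"
  unfolding compactin_def topspace_cofinite_nat
proof (intro conjI allI impI)
  fix \<U> assume cover: "(\<forall>U\<in>\<U>. openin cofinite_nat U) \<and> S \<subseteq> \<Union>\<U>"
  show "\<exists>\<F>. finite \<F> \<and> \<F> \<subseteq> \<U> \<and> S \<subseteq> \<Union>\<F>"
  proof (cases "S = {}")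
    case False
    then obtain U0 where U0: "U0 \<in> \<U>" "U0 \<noteq> {}"
      using cover by blast
    then have "finite (- U0)"
      using cover by (auto simp: openin_cofinite_nat)
    then have "finite (S - U0)"
      by (rule finite_subset[rotated]) blast
    moreover have "\<forall>x\<in>S - U0. \<exists>U\<in>\<U>. x \<in> U"
      using cover by blast
    then obtain f where "\<forall>x\<in>S - U0. f x \<in> \<U> \<and> x \<in> f x"
      by metis
    ultimately show ?thesis
      using U0 by (intro exI[of _ "insert U0 (f ` (S - U0))"]) auto
  qed (intro exI[of _ "{}"], simp)
qed simp

lemma Qsets_cofinite_nat: "Qsets cofinite_nat = {K. K \<noteq> {}}"
  by (auto simp: Qsets_def compactin_cofinite_nat saturated_t1_space t1_space_cofinite_nat)

lemma filtered_family_tails: "filtered_family (range (\<lambda>n::nat. {n..}))"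
  unfolding filtered_family_def
proof (intro conjI ballI)
  fix K1 K2 assume "K1 \<in> range (\<lambda>n::nat. {n..})" "K2 \<in> range (\<lambda>n::nat. {n..})"
  then obtain a b where "K1 = {a..}" "K2 = {b..}" by blast
  then show "\<exists>K3\<in>range (\<lambda>n::nat. {n..}). K3 \<subseteq> K1 \<inter> K2"
    by (intro bexI[of _ "{max a b..}"]) auto
qed simp

lemma Inter_tails: "\<Inter>(range (\<lambda>n::nat. {n..})) = {}"
  using Suc_n_not_le_n by blast

lemma not_well_filtered_cofinite_nat: "\<not> well_filtered cofinite_nat"
proof
  assume "well_filtered cofinite_nat"
  moreover have "range (\<lambda>n::nat. {n..}) \<subseteq> Qsets cofinite_nat"
    by (auto simp: Qsets_cofinite_nat)
  ultimately obtain K where "K \<in> range (\<lambda>n::nat. {n..})" "K \<subseteq> {}"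
    using filtered_family_tails Inter_tails openin_empty
    unfolding well_filtered_def by (metis order_refl)
  then show False by blast
qed

lemma minimal_closed_meeting_tails:
  "minimal_closed_meeting cofinite_nat (range (\<lambda>n::nat. {n..})) UNIV"
  unfolding minimal_closed_meeting_def
proof (intro conjI allI impI)
  fix C :: "nat set"
  assume "closedin cofinite_nat C" and meets: "\<forall>K\<in>range (\<lambda>n. {n..}). C \<inter> K \<noteq> {}"
  show "C = UNIV"
  proof (rule ccontr)
    assume "C \<noteq> UNIV"
    then have "finite C"
      using \<open>closedin cofinite_nat C\<close> by (simp add: closedin_cofinite_nat)
    then obtain n where "C \<subseteq> {..<n}"
      using finite_nat_bounded by blast
    then have "C \<inter> {n..} = {}" by auto
    with meets show False by blast
  qed
qed (simp_all add: closedin_cofinite_nat)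

lemma rudin_set_UNIV_cofinite_nat: "rudin_set cofinite_nat UNIV"
  unfolding rudin_set_def
  using minimal_closed_meeting_tails filtered_family_tails
    closure_of_topspace[of cofinite_nat, unfolded topspace_cofinite_nat]
  by (intro conjI exI[of _ "range (\<lambda>n::nat. {n..})"]) (auto simp: Qsets_cofinite_nat)

lemma closed_rudin_sets_cofinite_nat:
  "{A. closedin cofinite_nat A \<and> rudin_set cofinite_nat A} = insert UNIV {{n} | n. True}"
proof (intro equalityI subsetI)
  fix A :: "nat set" assume "A \<in> {A. closedin cofinite_nat A \<and> rudin_set cofinite_nat A}"
  then obtain \<K> where "closedin cofinite_nat A" "filtered_family \<K>"
    "minimal_closed_meeting cofinite_nat \<K> A"
    by (auto simp: rudin_set_def closure_of_closedin)
  then consider "A = UNIV" | "\<exists>n. A = {n}"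
    using minimal_closed_meeting_finite_t1_space_singleton[OF t1_space_cofinite_nat]
    unfolding closedin_cofinite_nat by blast
  then show "A \<in> insert UNIV {{n} | n. True}"
    by cases auto
next
  fix A :: "nat set" assume "A \<in> insert UNIV {{n} | n. True}"
  then consider "A = UNIV" | n where "A = {n}" by blast
  then show "A \<in> {A. closedin cofinite_nat A \<and> rudin_set cofinite_nat A}"
  proof cases
    case 1
    then show ?thesis
      using rudin_set_UNIV_cofinite_nat by (simp add: closedin_cofinite_nat)
  next
    case 2
    then show ?thesis
      using rudin_set_singleton_t1_space[OF t1_space_cofinite_nat _ compactin_cofinite_nat]
      by (simp add: closedin_cofinite_nat)
  qed
qed

theorem mainTheorem2:
  shows "d_space cofinite_nat \<and> s_well_filtered cofinite_nat \<and>
         {A. closedin cofinite_nat A \<and> rudin_set cofinite_nat A} = insert UNIV {{n} | n. True} \<and>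
         \<not> well_filtered cofinite_nat"
  using t1_space_imp_d_space[OF t1_space_cofinite_nat]
    t1_space_imp_s_well_filtered[OF t1_space_cofinite_nat]
    closed_rudin_sets_cofinite_nat not_well_filtered_cofinite_nat
  by (intro conjI)

end
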